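(* Let $\mathsf{CS}$ be a constant specification for $\mathsf{J4C}^+$. For every set of formulas $T$ and formula $\phi$: if $T\models_{\mathsf{J4C}^+_{\mathsf{CS}}}\phi$, then $T\vdash_{\mathsf{J4C}^+_{\mathsf{CS}}}\phi$.
   Context: Language: countable sets $\mathsf{Const}$, $\mathsf{Var}$, $\mathsf{Prop}$; terms $t ::= c \mid x \mid t\cdot t \mid t+t \mid\ !t$; formulas $\phi ::= p \mid \neg\phi \mid \phi\wedge\phi \mid \phi\supset\phi \mid \phi>\phi \mid t{:}\phi$; $\mathsf{Tm},\mathsf{Fm}$ the sets of terms and formulas. Axiom schemes of $\mathsf{J4C}^+$: (A1) all instances of classical tautologies; (A2) $(\phi>(\psi\supset\chi))\supset((\phi>\psi)\supset(\phi>\chi))$; (A3) $\phi>\phi$; (A4) $(\phi>\psi)\supset(\phi\supset\psi)$; (A5) $(s{:}(\phi>\psi)\wedge t{:}\phi) > (s\cdot t){:}\psi$; (A6) $s{:}\phi > (s+t){:}\phi$; (A7) $t{:}\phi>(s+t){:}\phi$; (A9) $t{:}\phi > (!t){:}t{:}\phi$ (there is no scheme $t{:}\phi>\phi$). A constant specification $\mathsf{CS}$ is a set of $c{:}\phi$ with $c\in\mathsf{Const}$, $\phi$ an instance of these schemes. $\mathsf{J4C}^+_{\mathsf{CS}}$: these axioms and $\mathsf{CS}$; rules (MP) from $\phi,\phi\supset\psi$ infer $\psi$, and (RCN) from $\psi$ infer $\phi>\psi$. $T\vdash\phi$ iff $\vdash(\psi_1\wedge\cdots\wedge\psi_n)\supset\phi$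 for some $\psi_1,\dots,\psi_n\in T$, $n\ge0$. Relational models $\mathcal M=(W,W_N,R_{Fm},R_{Tm},V)$: $W$ nonempty, $W_N\subseteq W$ nonempty (normal states); $R_\phi\subseteq W_N\times W_N$ for each formula; $R_t\subseteq W\times W$ for each term; $V(w)\subseteq\mathsf{Prop}$ for $w\in W_N$, $V(w)\subseteq\mathsf{Fm}$ for $w\in W\setminus W_N$. Truth: at non-normal $w$, $w\models\phi$ iff $\phi\in V(w)$; at normal $w$: $p$ iff $p\in V(w)$, $\neg,\wedge,\supset$ classical, $\phi>\psi$ iff $R_\phi(w)\subseteq[\psi]$, $t{:}\phi$ iff $R_t(w)\subseteq[\phi]$, with $[\phi]=\{w\in W:w\models\phi\}$. A $\mathsf{J4C}^+_{\mathsf{CS}}$-model is a relational model such that for all $w\in W_N$: (1) $R_\phi(w)\subseteq[\phi]$; (2) if $w\in[\phi]$ then $w\in R_\phi(w)$; (3) $R_c(w)\subseteq[\phi]$ for each $c{:}\phi\in\mathsf{CS}$; (4) $R_{s+t}(w)\subseteq R_s(w)\cap R_t(w)$; (5) for all $v\in R_{s\cdot t}(w)$, all $\phi,\psi$: if $w\in[s{:}(\phi>\psi)\wedge t{:}\phi]$ then $v\in[\psi]$; (7) for all $t$ and $v,u\in W$, if $wR_{!t}v$ and $vR_tu$ then $wR_tu$ (no reflexivity requirement on $R_t$). $T\models_{\mathsf{J4C}^+_{\mathsf{CS}}}\phi$ iff for every such model and every $w\in W_N$ at which all members of $T$ are true, $\phi$ is true at $w$. *)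

theory Defs
  imports "HOL-Library.Countable"
begin

datatype ('c, 'v) tm =
    TConst 'c
  | TVar 'v
  | App "('c, 'v) tm" "('c, 'v) tm"
  | Plus "('c, 'v) tm" "('c, 'v) tm"
  | Bang "('c, 'v) tm"

datatype ('c, 'v, 'p) fm =
    Atom 'p
  | Neg "('c, 'v, 'p) fm"
  | And "('c, 'v, 'p) fm" "('c, 'v, 'p) fm"
  | Imp "('c, 'v, 'p) fm" "('c, 'v, 'p) fm"
  | Cond "('c, 'v, 'p) fm" "('c, 'v, 'p) fm"
  | Just "('c, 'v) tm" "('c, 'v, 'p) fm"

fun tval :: "(('c, 'v, 'p) fm \<Rightarrow> bool) \<Rightarrow> ('c, 'v, 'p) fm \<Rightarrow> bool" where
  "tval g (Atom p) = g (Atom p)"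
| "tval g (Neg a) = (\<not> tval g a)"
| "tval g (And a b) = (tval g a \<and> tval g b)"
| "tval g (Imp a b) = (tval g a \<longrightarrow> tval g b)"
| "tval g (Cond a b) = g (Cond a b)"
| "tval g (Just t a) = g (Just t a)"

definition taut_instance :: "('c, 'v, 'p) fm \<Rightarrow> bool" where
  "taut_instance \<phi> \<longleftrightarrow> (\<forall>g. tval g \<phi>)"

inductive axiom :: "('c, 'v, 'p) fm \<Rightarrow> bool" where
  A1: "taut_instance \<phi> \<Longrightarrow> axiom \<phi>"
| A2: "axiom (Imp (Cond \<phi> (Imp \<psi> \<chi>)) (Imp (Cond \<phi> \<psi>) (Cond \<phi> \<chi>)))"
| A3: "axiom (Cond \<phi> \<phi>)"
| A4: "axiom (Imp (Cond \<phi> \<psi>) (Imp \<phi> \<psi>))"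
| A5: "axiom (Cond (And (Just s (Cond \<phi> \<psi>)) (Just t \<phi>)) (Just (App s t) \<psi>))"
| A6: "axiom (Cond (Just s \<phi>) (Just (Plus s t) \<phi>))"
| A7: "axiom (Cond (Just t \<phi>) (Just (Plus s t) \<phi>))"
| A9: "axiom (Cond (Just t \<phi>) (Just (Bang t) (Just t \<phi>)))"

definition const_spec :: "('c, 'v, 'p) fm set \<Rightarrow> bool" where
  "const_spec CS \<longleftrightarrow> (\<forall>\<chi>\<in>CS. \<exists>c \<phi>. \<chi> = Just (TConst c) \<phi> \<and> axiom \<phi>)"

inductive deriv :: "('c, 'v, 'p) fm set \<Rightarrow> ('c, 'v, 'p) fm \<Rightarrow> bool" for CS where
  Ax: "axiom \<phi> \<Longrightarrow> deriv CS \<phi>"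
| CSax: "\<phi> \<in> CS \<Longrightarrow> deriv CS \<phi>"
| MP: "deriv CS \<phi> \<Longrightarrow> deriv CS (Imp \<phi> \<psi>) \<Longrightarrow> deriv CS \<psi>"
| RCN: "deriv CS \<psi> \<Longrightarrow> deriv CS (Cond \<phi> \<psi>)"

fun conjs :: "('c, 'v, 'p) fm list \<Rightarrow> ('c, 'v, 'p) fm" where
  "conjs [] = undefined"
| "conjs [\<psi>] = \<psi>"
| "conjs (\<psi> # \<psi>s) = And \<psi> (conjs \<psi>s)"

definition deriv_from :: "('c, 'v, 'p) fm set \<Rightarrow> ('c, 'v, 'p) fm set \<Rightarrow> ('c, 'v, 'p) fm \<Rightarrow> bool" where
  "deriv_from CS T \<phi> \<longleftrightarrow>
     deriv CS \<phi> \<or> (\<exists>\<psi>s. \<psi>s \<noteq> [] \<and> set \<psi>s \<subseteq> T \<and> deriv CS (Imp (conjs \<psi>s) \<phi>))"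

text \<open>V is split into VN (normal states, sets of propositional letters) and
  VA (non-normal states, arbitrary sets of formulas).\<close>
record ('c, 'v, 'p, 'w) rmodel =
  W  :: "'w set"
  WN :: "'w set"
  RF :: "('c, 'v, 'p) fm \<Rightarrow> ('w \<times> 'w) set"
  RT :: "('c, 'v) tm \<Rightarrow> ('w \<times> 'w) set"
  VN :: "'w \<Rightarrow> 'p set"
  VA :: "'w \<Rightarrow> ('c, 'v, 'p) fm set"

fun sat :: "('c, 'v, 'p, 'w) rmodel \<Rightarrow> 'w \<Rightarrow> ('c, 'v, 'p) fm \<Rightarrow> bool" where
  "sat M w (Atom p) = (if w \<in> WN M then p \<in> VN M w else Atom p \<in> VA M w)"
| "sat M w (Neg a) = (if w \<in> WN M then \<not> sat M w a else Neg a \<in> VA M w)"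
| "sat M w (And a b) = (if w \<in> WN M then sat M w a \<and> sat M w b else And a b \<in> VA M w)"
| "sat M w (Imp a b) = (if w \<in> WN M then (sat M w a \<longrightarrow> sat M w b) else Imp a b \<in> VA M w)"
| "sat M w (Cond a b) = (if w \<in> WN M then (\<forall>v. (w, v) \<in> RF M a \<longrightarrow> v \<in> W M \<and> sat M v b)
                         else Cond a b \<in> VA M w)"
| "sat M w (Just t a) = (if w \<in> WN M then (\<forall>v. (w, v) \<in> RT M t \<longrightarrow> v \<in> W M \<and> sat M v a)
                         else Just t a \<in> VA M w)"

definition ext :: "('c, 'v, 'p, 'w) rmodel \<Rightarrow> ('c, 'v, 'p) fm \<Rightarrow> 'w set" where
  "ext M \<phi> = {w \<in> W M. sat M w \<phi>}"

definition rel_model :: "('c, 'v, 'p, 'w) rmodel \<Rightarrow> bool" where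
  "rel_model M \<longleftrightarrow> W M \<noteq> {} \<and> WN M \<noteq> {} \<and> WN M \<subseteq> W M
     \<and> (\<forall>\<phi>. RF M \<phi> \<subseteq> WN M \<times> WN M) \<and> (\<forall>t. RT M t \<subseteq> W M \<times> W M)"

definition J4C_model :: "('c, 'v, 'p) fm set \<Rightarrow> ('c, 'v, 'p, 'w) rmodel \<Rightarrow> bool" where
  "J4C_model CS M \<longleftrightarrow> rel_model M \<and> (\<forall>w\<in>WN M.
       (\<forall>\<phi>. RF M \<phi> `` {w} \<subseteq> ext M \<phi>)
     \<and> (\<forall>\<phi>. w \<in> ext M \<phi> \<longrightarrow> (w, w) \<in> RF M \<phi>)
     \<and> (\<forall>c \<phi>. Just (TConst c) \<phi> \<in> CS \<longrightarrow> RT M (TConst c) `` {w} \<subseteq> ext M \<phi>)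
     \<and> (\<forall>s t. RT M (Plus s t) `` {w} \<subseteq> RT M s `` {w} \<inter> RT M t `` {w})
     \<and> (\<forall>s t. \<forall>v \<in> RT M (App s t) `` {w}. \<forall>\<phi> \<psi>.
           w \<in> ext M (And (Just s (Cond \<phi> \<psi>)) (Just t \<phi>)) \<longrightarrow> v \<in> ext M \<psi>)
     \<and> (\<forall>t v u. (w, v) \<in> RT M (Bang t) \<longrightarrow> (v, u) \<in> RT M t \<longrightarrow> (w, u) \<in> RT M t))"

text \<open>Semantic consequence. The carrier type of states is fixed to
  (formula set \<times> bool), which has room for the canonical model.\<close>
definition entails :: "('c, 'v, 'p) fm set \<Rightarrow> ('c, 'v, 'p) fm set \<Rightarrow> ('c, 'v, 'p) fm \<Rightarrow> bool" where
  "entails CS T \<phi> \<longleftrightarrow>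
     (\<forall>M :: ('c, 'v, 'p, ('c, 'v, 'p) fm set \<times> bool) rmodel.
        J4C_model CS M \<longrightarrow> (\<forall>w\<in>WN M. (\<forall>\<psi>\<in>T. sat M w \<psi>) \<longrightarrow> sat M w \<phi>))"

end

theory Submission
  imports Defs
begin

text \<open>Canonical model argument. Normal states are the maximal consistent sets G,
  and G sees D along the relation for \<phi> iff every \<psi> with \<phi> > \<psi> \<in> G lies in D;
  axioms A2-A4 and rule RCN make this a model of the conditional part and give the truth lemma for \<phi> > \<psi>.
  The justification successors of G are non-normal states, namely all formula sets
  X \<supseteq> {\<psi>. t:\<psi> \<in> G} valued by X itself, so the truth lemma for t:\<psi> is immediate,
  conditions (4) and (5) reduce to axioms A5-A7, and condition (7) holds vacuously
  because non-normal states have no successors. A formula \<phi> not derivable from T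
  is then refuted at a maximal consistent extension of T \<union> {\<not>\<phi>}.\<close>

instance tm :: (countable, countable) countable by countable_datatype
instance fm :: (countable, countable, countable) countable by countable_datatype

definition falsum :: "('c, 'v, 'p) fm" where
  "falsum = Neg (Imp (Atom undefined) (Atom undefined))"

lemma tval_falsum [simp]: "tval g falsum = False"
  by (simp add: falsum_def)

fun imps :: "('c, 'v, 'p) fm list \<Rightarrow> ('c, 'v, 'p) fm \<Rightarrow> ('c, 'v, 'p) fm" where
  "imps [] \<psi> = \<psi>"
| "imps (\<chi> # \<chi>s) \<psi> = Imp \<chi> (imps \<chi>s \<psi>)"

lemma tval_imps [simp]: "tval g (imps \<chi>s \<psi>) = ((\<forall>\<chi>\<in>set \<chi>s. tval g \<chi>) \<longrightarrow> tval g \<psi>)"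
  by (induct \<chi>s) auto

lemma tval_conjs: "\<chi>s \<noteq> [] \<Longrightarrow> tval g (conjs \<chi>s) = (\<forall>\<chi>\<in>set \<chi>s. tval g \<chi>)"
  by (induct \<chi>s rule: conjs.induct) auto

lemma deriv_tautI: "(\<And>g. tval g \<psi>) \<Longrightarrow> deriv CS \<psi>"
  by (intro deriv.Ax axiom.A1) (simp add: taut_instance_def)

lemma deriv_imps_mp: "deriv CS (imps \<chi>s \<psi>) \<Longrightarrow> \<forall>\<chi>\<in>set \<chi>s. deriv CS \<chi> \<Longrightarrow> deriv CS \<psi>"
  by (induct \<chi>s) (auto intro: deriv.MP)

definition derives :: "('c, 'v, 'p) fm set \<Rightarrow> ('c, 'v, 'p) fm set \<Rightarrow> ('c, 'v, 'p) fm \<Rightarrow> bool" where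
  "derives CS S \<psi> \<longleftrightarrow> (\<exists>\<chi>s. set \<chi>s \<subseteq> S \<and> deriv CS (imps \<chi>s \<psi>))"

lemma derives_mono: "derives CS S \<psi> \<Longrightarrow> S \<subseteq> S' \<Longrightarrow> derives CS S' \<psi>"
  unfolding derives_def by blast

lemma derives_assm: "\<psi> \<in> S \<Longrightarrow> derives CS S \<psi>"
  unfolding derives_def by (rule exI[of _ "[\<psi>]"]) (auto intro: deriv_tautI)

lemma derives_deriv: "deriv CS \<psi> \<Longrightarrow> derives CS S \<psi>"
  unfolding derives_def by (rule exI[of _ "[]"]) auto

lemma derives_tautI:
  assumes taut: "\<And>g. (\<forall>\<chi>\<in>set \<chi>s. tval g \<chi>) \<Longrightarrow> tval g \<psi>"
    and prems: "\<forall>\<chi>\<in>set \<chi>s. derives CS S \<chi>"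
  shows "derives CS S \<psi>"
proof -
  obtain L where L: "\<forall>\<chi>\<in>set \<chi>s. set (L \<chi>) \<subseteq> S \<and> deriv CS (imps (L \<chi>) \<chi>)"
    using prems unfolding derives_def by metis
  define P where "P = concat (map L \<chi>s)"
  have P_sub: "set P \<subseteq> S"
    using L unfolding P_def by auto
  have weakened: "deriv CS (imps P \<chi>)" if "\<chi> \<in> set \<chi>s" for \<chi>
  proof -
    have "deriv CS (Imp (imps (L \<chi>) \<chi>) (imps P \<chi>))"
      by (rule deriv_tautI) (use that in \<open>auto simp: P_def\<close>)
    then show ?thesis
      using L that by (blast intro: deriv.MP)
  qed
  have "deriv CS (imps (map (\<lambda>\<chi>. imps P \<chi>) \<chi>s) (imps P \<psi>))"
    by (rule deriv_tautI) (use taut in auto)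
  then have "deriv CS (imps P \<psi>)"
    by (rule deriv_imps_mp) (auto intro: weakened)
  then show ?thesis
    using P_sub derives_def by blast
qed

lemma derives_deduction: "derives CS (insert \<alpha> S) \<beta> \<Longrightarrow> derives CS S (Imp \<alpha> \<beta>)"
proof -
  assume "derives CS (insert \<alpha> S) \<beta>"
  then obtain \<chi>s where \<chi>s: "set \<chi>s \<subseteq> insert \<alpha> S" "deriv CS (imps \<chi>s \<beta>)"
    unfolding derives_def by blast
  define \<chi>s' where "\<chi>s' = filter (\<lambda>\<chi>. \<chi> \<noteq> \<alpha>) \<chi>s"
  have "deriv CS (Imp (imps \<chi>s \<beta>) (imps \<chi>s' (Imp \<alpha> \<beta>)))"
    by (rule deriv_tautI) (auto simp: \<chi>s'_def)
  then have "deriv CS (imps \<chi>s' (Imp \<alpha> \<beta>))"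
    using \<chi>s(2) by (blast intro: deriv.MP)
  moreover have "set \<chi>s' \<subseteq> S"
    using \<chi>s(1) unfolding \<chi>s'_def by auto
  ultimately show ?thesis
    unfolding derives_def by blast
qed

lemma derives_imp_deriv_from: "derives CS T \<phi> \<Longrightarrow> deriv_from CS T \<phi>"
proof -
  assume "derives CS T \<phi>"
  then obtain \<chi>s where \<chi>s: "set \<chi>s \<subseteq> T" "deriv CS (imps \<chi>s \<phi>)"
    unfolding derives_def by blast
  show ?thesis
  proof (cases "\<chi>s = []")
    case True
    then show ?thesis
      using \<chi>s unfolding deriv_from_def by simp
  next
    case False
    have "deriv CS (Imp (imps \<chi>s \<phi>) (Imp (conjs \<chi>s) \<phi>))"
      by (rule deriv_tautI) (simp add: tval_conjs[OF False])
    then have "deriv CS (Imp (conjs \<chi>s) \<phi>)"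
      using \<chi>s(2) by (blast intro: deriv.MP)
    then show ?thesis
      using \<chi>s(1) False unfolding deriv_from_def by blast
  qed
qed

section \<open>Maximal consistent sets\<close>

definition consistent :: "('c, 'v, 'p) fm set \<Rightarrow> ('c, 'v, 'p) fm set \<Rightarrow> bool" where
  "consistent CS S \<longleftrightarrow> \<not> derives CS S falsum"

definition max_consistent :: "('c, 'v, 'p) fm set \<Rightarrow> ('c, 'v, 'p) fm set \<Rightarrow> bool" where
  "max_consistent CS G \<longleftrightarrow> consistent CS G \<and> (\<forall>\<psi>. consistent CS (insert \<psi> G) \<longrightarrow> \<psi> \<in> G)"

lemma consistent_subset: "consistent CS S' \<Longrightarrow> S \<subseteq> S' \<Longrightarrow> consistent CS S"
  unfolding consistent_def using derives_mono by blast

lemma consistent_insert_Neg: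
  assumes "\<not> derives CS S \<psi>"
  shows "consistent CS (insert (Neg \<psi>) S)"
  unfolding consistent_def
proof
  assume "derives CS (insert (Neg \<psi>) S) falsum"
  then have "derives CS S (Imp (Neg \<psi>) falsum)"
    by (rule derives_deduction)
  then have "derives CS S \<psi>"
    by (intro derives_tautI[of "[Imp (Neg \<psi>) falsum]"]) auto
  with assms show False ..
qed

lemma max_consistent_derives_mem:
  assumes G: "max_consistent CS G" and "derives CS G \<psi>"
  shows "\<psi> \<in> G"
proof (rule ccontr)
  assume "\<psi> \<notin> G"
  then have "derives CS (insert \<psi> G) falsum"
    using G unfolding max_consistent_def consistent_def by blast
  then have "derives CS G (Imp \<psi> falsum)"
    by (rule derives_deduction)
  then have "derives CS G falsum"
    using assms(2) by (intro derives_tautI[of "[\<psi>, Imp \<psi> falsum]"]) auto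
  then show False
    using G unfolding max_consistent_def consistent_def by blast
qed

lemma max_consistent_deriv_mem: "max_consistent CS G \<Longrightarrow> deriv CS \<psi> \<Longrightarrow> \<psi> \<in> G"
  by (blast intro: max_consistent_derives_mem derives_deriv)

lemma max_consistent_axiom_mem: "max_consistent CS G \<Longrightarrow> axiom \<psi> \<Longrightarrow> \<psi> \<in> G"
  by (blast intro: max_consistent_deriv_mem deriv.Ax)

lemma max_consistent_tautI:
  "max_consistent CS G \<Longrightarrow> (\<And>g. (\<forall>\<chi>\<in>set \<chi>s. tval g \<chi>) \<Longrightarrow> tval g \<psi>) \<Longrightarrow> set \<chi>s \<subseteq> G \<Longrightarrow> \<psi> \<in> G"
  by (erule max_consistent_derives_mem, erule derives_tautI) (auto intro: derives_assm)

lemma max_consistent_Neg: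
  assumes G: "max_consistent CS G"
  shows "Neg \<psi> \<in> G \<longleftrightarrow> \<psi> \<notin> G"
proof
  assume "Neg \<psi> \<in> G"
  show "\<psi> \<notin> G"
  proof
    assume "\<psi> \<in> G"
    with \<open>Neg \<psi> \<in> G\<close> have "falsum \<in> G"
      by (intro max_consistent_tautI[OF G, of "[\<psi>, Neg \<psi>]"]) auto
    then show False
      using G derives_assm unfolding max_consistent_def consistent_def by blast
  qed
next
  assume "\<psi> \<notin> G"
  then have "\<not> derives CS G \<psi>"
    using max_consistent_derives_mem[OF G] by blast
  then have "consistent CS (insert (Neg \<psi>) G)"
    by (rule consistent_insert_Neg)
  then show "Neg \<psi> \<in> G"
    using G unfolding max_consistent_def by blast
qed

lemma max_consistent_And:
  assumes G: "max_consistent CS G"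
  shows "And \<alpha> \<beta> \<in> G \<longleftrightarrow> \<alpha> \<in> G \<and> \<beta> \<in> G"
proof
  assume "And \<alpha> \<beta> \<in> G"
  then show "\<alpha> \<in> G \<and> \<beta> \<in> G"
    using max_consistent_tautI[OF G, of "[And \<alpha> \<beta>]" \<alpha>]
      max_consistent_tautI[OF G, of "[And \<alpha> \<beta>]" \<beta>] by auto
next
  assume "\<alpha> \<in> G \<and> \<beta> \<in> G"
  then show "And \<alpha> \<beta> \<in> G"
    using max_consistent_tautI[OF G, of "[\<alpha>, \<beta>]" "And \<alpha> \<beta>"] by auto
qed

lemma max_consistent_Imp:
  assumes G: "max_consistent CS G"
  shows "Imp \<alpha> \<beta> \<in> G \<longleftrightarrow> (\<alpha> \<in> G \<longrightarrow> \<beta> \<in> G)"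
proof (cases "\<alpha> \<in> G")
  case True
  then show ?thesis
    using max_consistent_tautI[OF G, of "[\<alpha>, Imp \<alpha> \<beta>]" \<beta>]
      max_consistent_tautI[OF G, of "[\<beta>]" "Imp \<alpha> \<beta>"] by auto
next
  case False
  then have "Neg \<alpha> \<in> G"
    using max_consistent_Neg[OF G] by blast
  then show ?thesis
    using False max_consistent_tautI[OF G, of "[Neg \<alpha>]" "Imp \<alpha> \<beta>"] by auto
qed

lemma max_consistent_Cond_mp:
  assumes G: "max_consistent CS G" and "Cond \<alpha> \<beta> \<in> G" "\<alpha> \<in> G"
  shows "\<beta> \<in> G"
  using assms max_consistent_axiom_mem[OF G axiom.A4[of \<alpha> \<beta>]] max_consistent_Imp[OF G] by blast

lemma max_consistent_Cond_imps:
  assumes G: "max_consistent CS G"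
  shows "\<forall>\<chi>\<in>set \<chi>s. Cond \<alpha> \<chi> \<in> G \<Longrightarrow> Cond \<alpha> (imps \<chi>s \<psi>) \<in> G \<Longrightarrow> Cond \<alpha> \<psi> \<in> G"
proof (induct \<chi>s)
  case Nil
  then show ?case by simp
next
  case (Cons \<chi> \<chi>s)
  have "Imp (Cond \<alpha> (Imp \<chi> (imps \<chi>s \<psi>))) (Imp (Cond \<alpha> \<chi>) (Cond \<alpha> (imps \<chi>s \<psi>))) \<in> G"
    by (rule max_consistent_axiom_mem[OF G axiom.A2])
  then have "Cond \<alpha> (imps \<chi>s \<psi>) \<in> G"
    using Cons.prems max_consistent_Imp[OF G] by auto
  then show ?case
    using Cons by auto
qed

text \<open>RCN yields \<alpha> > (\<chi>1 \<supset> ... \<supset> \<psi>) from a derivation of the chain, and A2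
  then discharges its premises one by one.\<close>
lemma max_consistent_Cond_derives:
  assumes G: "max_consistent CS G" and "derives CS {\<beta>. Cond \<alpha> \<beta> \<in> G} \<psi>"
  shows "Cond \<alpha> \<psi> \<in> G"
proof -
  obtain \<chi>s where \<chi>s: "set \<chi>s \<subseteq> {\<beta>. Cond \<alpha> \<beta> \<in> G}" "deriv CS (imps \<chi>s \<psi>)"
    using assms(2) derives_def by blast
  have "Cond \<alpha> (imps \<chi>s \<psi>) \<in> G"
    using \<chi>s(2) by (intro max_consistent_deriv_mem[OF G] deriv.RCN)
  then show ?thesis
    using max_consistent_Cond_imps[OF G] \<chi>s(1) by blast
qed

section \<open>Lindenbaum's lemma\<close>

fun lindenbaum_chain ::
  "('c::countable, 'v::countable, 'p::countable) fm set \<Rightarrow> ('c, 'v, 'p) fm set \<Rightarrow> nat \<Rightarrow> ('c, 'v, 'p) fm set"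
where
  "lindenbaum_chain CS S 0 = S"
| "lindenbaum_chain CS S (Suc n) =
     (if consistent CS (insert (from_nat n) (lindenbaum_chain CS S n))
      then insert (from_nat n) (lindenbaum_chain CS S n) else lindenbaum_chain CS S n)"

lemma lindenbaum_chain_mono: "m \<le> n \<Longrightarrow> lindenbaum_chain CS S m \<subseteq> lindenbaum_chain CS S n"
  by (induct n) (auto simp: le_Suc_eq)

lemma lindenbaum_chain_consistent: "consistent CS S \<Longrightarrow> consistent CS (lindenbaum_chain CS S n)"
  by (induct n) auto

lemma lindenbaum_chain_finite_subset:
  "set \<chi>s \<subseteq> (\<Union>n. lindenbaum_chain CS S n) \<Longrightarrow> \<exists>n. set \<chi>s \<subseteq> lindenbaum_chain CS S n"
proof (induct \<chi>s)
  case Nil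
  then show ?case by simp
next
  case (Cons \<chi> \<chi>s)
  then obtain n m where "set \<chi>s \<subseteq> lindenbaum_chain CS S n" "\<chi> \<in> lindenbaum_chain CS S m"
    by auto
  then have "set (\<chi> # \<chi>s) \<subseteq> lindenbaum_chain CS S (max n m)"
    using lindenbaum_chain_mono[of n "max n m" CS S] lindenbaum_chain_mono[of m "max n m" CS S] by auto
  then show ?case by blast
qed

lemma lindenbaum:
  fixes S :: "('c::countable, 'v::countable, 'p::countable) fm set"
  assumes "consistent CS S"
  obtains G where "S \<subseteq> G" "max_consistent CS G"
proof
  define U where "U = (\<Union>n. lindenbaum_chain CS S n)"
  show "S \<subseteq> U"
    unfolding U_def using lindenbaum_chain.simps(1)[of CS S] by blast
  have "consistent CS U"
    unfolding consistent_def
  proof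
    assume "derives CS U falsum"
    then obtain \<chi>s where \<chi>s: "set \<chi>s \<subseteq> U" "deriv CS (imps \<chi>s falsum)"
      unfolding derives_def by blast
    then obtain n where "set \<chi>s \<subseteq> lindenbaum_chain CS S n"
      using lindenbaum_chain_finite_subset unfolding U_def by blast
    then have "derives CS (lindenbaum_chain CS S n) falsum"
      using \<chi>s(2) derives_def by blast
    then show False
      using lindenbaum_chain_consistent[OF assms, of n] consistent_def by blast
  qed
  moreover have "\<psi> \<in> U" if "consistent CS (insert \<psi> U)" for \<psi>
  proof -
    have "insert \<psi> (lindenbaum_chain CS S (to_nat \<psi>)) \<subseteq> insert \<psi> U"
      unfolding U_def by blast
    then have "\<psi> \<in> lindenbaum_chain CS S (Suc (to_nat \<psi>))"
      using consistent_subset[OF that] by simp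
    then show ?thesis
      unfolding U_def by blast
  qed
  ultimately show "max_consistent CS U"
    unfolding max_consistent_def by blast
qed

section \<open>The canonical model\<close>

text \<open>States are pairs (X, b): the normal states are the (G, True) with G maximal
  consistent, every (X, False) is a non-normal state valued by X.\<close>
definition canonical_model ::
  "('c::countable, 'v::countable, 'p::countable) fm set \<Rightarrow> ('c, 'v, 'p, ('c, 'v, 'p) fm set \<times> bool) rmodel"
where
  "canonical_model CS =
    \<lparr>W = UNIV, WN = {(G, True) | G. max_consistent CS G},
     RF = (\<lambda>\<alpha>. {((G, True), (D, True)) | G D.
                  max_consistent CS G \<and> max_consistent CS D \<and> {\<beta>. Cond \<alpha> \<beta> \<in> G} \<subseteq> D}),
     RT = (\<lambda>t. {((G, True), (X, False)) | G X. max_consistent CS G \<and> {\<beta>. Just t \<beta> \<in> G} \<subseteq> X}),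
     VN = (\<lambda>w. {p. Atom p \<in> fst w}), VA = fst\<rparr>"

lemma canonical_model_simps [simp]:
  "W (canonical_model CS) = UNIV"
  "(G, b) \<in> WN (canonical_model CS) \<longleftrightarrow> b \<and> max_consistent CS G"
  "VN (canonical_model CS) w = {p. Atom p \<in> fst w}"
  "VA (canonical_model CS) w = fst w"
  by (auto simp: canonical_model_def)

lemma canonical_RF_iff:
  "(w, v) \<in> RF (canonical_model CS) \<alpha> \<longleftrightarrow>
   (\<exists>G D. w = (G, True) \<and> v = (D, True) \<and> max_consistent CS G \<and> max_consistent CS D
          \<and> {\<beta>. Cond \<alpha> \<beta> \<in> G} \<subseteq> D)"
  by (auto simp: canonical_model_def)

lemma canonical_RT_iff:
  "(w, v) \<in> RT (canonical_model CS) t \<longleftrightarrow>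
   (\<exists>G X. w = (G, True) \<and> v = (X, False) \<and> max_consistent CS G \<and> {\<beta>. Just t \<beta> \<in> G} \<subseteq> X)"
  by (auto simp: canonical_model_def)

lemma canonical_sat_nonnormal: "sat (canonical_model CS) (X, False) \<psi> \<longleftrightarrow> \<psi> \<in> X"
  by (cases \<psi>) auto

lemma canonical_Cond_mem:
  fixes G :: "('c::countable, 'v::countable, 'p::countable) fm set"
  assumes G: "max_consistent CS G"
    and succ: "\<And>D. max_consistent CS D \<Longrightarrow> {\<beta>. Cond \<alpha> \<beta> \<in> G} \<subseteq> D \<Longrightarrow> \<psi> \<in> D"
  shows "Cond \<alpha> \<psi> \<in> G"
proof (rule ccontr)
  assume "Cond \<alpha> \<psi> \<notin> G"
  then have "\<not> derives CS {\<beta>. Cond \<alpha> \<beta> \<in> G} \<psi>"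
    using max_consistent_Cond_derives[OF G] by blast
  then have "consistent CS (insert (Neg \<psi>) {\<beta>. Cond \<alpha> \<beta> \<in> G})"
    by (rule consistent_insert_Neg)
  then obtain D where D: "insert (Neg \<psi>) {\<beta>. Cond \<alpha> \<beta> \<in> G} \<subseteq> D" "max_consistent CS D"
    by (rule lindenbaum)
  then show False
    using succ max_consistent_Neg[OF D(2)] by blast
qed

lemma canonical_truth:
  "max_consistent CS G \<Longrightarrow> sat (canonical_model CS) (G, True) \<psi> \<longleftrightarrow> \<psi> \<in> G"
proof (induct \<psi> arbitrary: G)
  case (Atom p)
  then show ?case by simp
next
  case (Neg \<alpha>)
  then show ?case using max_consistent_Neg[OF Neg.prems] by simp
next
  case (And \<alpha> \<beta>)
  then show ?case using max_consistent_And[OF And.prems] by simp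
next
  case (Imp \<alpha> \<beta>)
  then show ?case using max_consistent_Imp[OF Imp.prems] by simp
next
  case (Cond \<alpha> \<beta>)
  then have "sat (canonical_model CS) (G, True) (Cond \<alpha> \<beta>) \<longleftrightarrow>
             (\<forall>D. max_consistent CS D \<and> {\<psi>. Cond \<alpha> \<psi> \<in> G} \<subseteq> D \<longrightarrow> \<beta> \<in> D)"
    by (auto simp: canonical_RF_iff)
  then show ?case
    using canonical_Cond_mem[OF Cond.prems] by blast
next
  case (Just t \<alpha>)
  then have "sat (canonical_model CS) (G, True) (Just t \<alpha>) \<longleftrightarrow>
             (\<forall>X. {\<psi>. Just t \<psi> \<in> G} \<subseteq> X \<longrightarrow> \<alpha> \<in> X)"
    by (auto simp: canonical_RT_iff canonical_sat_nonnormal)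
  then show ?case by blast
qed

lemma canonical_ext_normal:
  "max_consistent CS D \<Longrightarrow> (D, True) \<in> ext (canonical_model CS) \<psi> \<longleftrightarrow> \<psi> \<in> D"
  by (simp add: ext_def canonical_truth)

lemma canonical_ext_nonnormal: "(X, False) \<in> ext (canonical_model CS) \<psi> \<longleftrightarrow> \<psi> \<in> X"
  by (simp add: ext_def canonical_sat_nonnormal)

lemma canonical_RT_antimono:
  assumes G: "max_consistent CS G" and "\<And>\<beta>. Cond (Just s \<beta>) (Just t \<beta>) \<in> G"
  shows "RT (canonical_model CS) t `` {(G, True)} \<subseteq> RT (canonical_model CS) s `` {(G, True)}"
  using assms max_consistent_Cond_mp[OF G] by (fastforce simp: canonical_RT_iff)

lemma canonical_RT_Plus:
  assumes "max_consistent CS G"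
  shows "RT (canonical_model CS) (Plus s t) `` {(G, True)} \<subseteq>
           RT (canonical_model CS) s `` {(G, True)} \<inter> RT (canonical_model CS) t `` {(G, True)}"
  using canonical_RT_antimono[OF assms max_consistent_axiom_mem[OF assms axiom.A6]]
    canonical_RT_antimono[OF assms max_consistent_axiom_mem[OF assms axiom.A7]]
  by blast

lemma canonical_RT_App:
  assumes G: "max_consistent CS G"
    and v: "v \<in> RT (canonical_model CS) (App s t) `` {(G, True)}"
    and "(G, True) \<in> ext (canonical_model CS) (And (Just s (Cond \<phi> \<psi>)) (Just t \<phi>))"
  shows "v \<in> ext (canonical_model CS) \<psi>"
proof -
  obtain X where X: "v = (X, False)" "{\<beta>. Just (App s t) \<beta> \<in> G} \<subseteq> X"
    using v by (auto simp: canonical_RT_iff)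
  have "Just (App s t) \<psi> \<in> G"
    using assms(3) canonical_ext_normal[OF G]
      max_consistent_Cond_mp[OF G max_consistent_axiom_mem[OF G axiom.A5]] by blast
  then show ?thesis
    using X canonical_ext_nonnormal by blast
qed

lemma canonical_model_J4C:
  assumes "max_consistent CS G\<^sub>0"
  shows "J4C_model CS (canonical_model CS)"
  unfolding J4C_model_def
proof (intro conjI ballI)
  have "(G\<^sub>0, True) \<in> WN (canonical_model CS)"
    using assms by simp
  then show "rel_model (canonical_model CS)"
    unfolding rel_model_def by (fastforce simp: canonical_RF_iff canonical_RT_iff)
next
  fix w
  assume "w \<in> WN (canonical_model CS)"
  then obtain G where w: "w = (G, True)" and G: "max_consistent CS G"
    by (cases w) auto
  show "\<forall>\<phi>. RF (canonical_model CS) \<phi> `` {w} \<subseteq> ext (canonical_model CS) \<phi>"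
    using w G max_consistent_axiom_mem[OF G axiom.A3] canonical_ext_normal
    by (fastforce simp: canonical_RF_iff)
  show "\<forall>\<phi>. w \<in> ext (canonical_model CS) \<phi> \<longrightarrow> (w, w) \<in> RF (canonical_model CS) \<phi>"
    using w G canonical_ext_normal[OF G] max_consistent_Cond_mp[OF G] by (auto simp: canonical_RF_iff)
  show "\<forall>c \<phi>. Just (TConst c) \<phi> \<in> CS \<longrightarrow>
          RT (canonical_model CS) (TConst c) `` {w} \<subseteq> ext (canonical_model CS) \<phi>"
    using w G max_consistent_deriv_mem[OF G deriv.CSax] canonical_ext_nonnormal
    by (fastforce simp: canonical_RT_iff)
  show "\<forall>s t. RT (canonical_model CS) (Plus s t) `` {w} \<subseteq>
          RT (canonical_model CS) s `` {w} \<inter> RT (canonical_model CS) t `` {w}"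
    unfolding w using canonical_RT_Plus[OF G] by blast
  show "\<forall>s t. \<forall>v \<in> RT (canonical_model CS) (App s t) `` {w}. \<forall>\<phi> \<psi>.
          w \<in> ext (canonical_model CS) (And (Just s (Cond \<phi> \<psi>)) (Just t \<phi>)) \<longrightarrow>
          v \<in> ext (canonical_model CS) \<psi>"
    unfolding w using canonical_RT_App[OF G] by blast
  show "\<forall>t v u. (w, v) \<in> RT (canonical_model CS) (Bang t) \<longrightarrow>
          (v, u) \<in> RT (canonical_model CS) t \<longrightarrow> (w, u) \<in> RT (canonical_model CS) t"
    by (auto simp: canonical_RT_iff)
qed

theorem mainTheorem14:
  fixes CS :: "('c::countable, 'v::countable, 'p::countable) fm set"
    and T :: "('c, 'v, 'p) fm set"
    and \<phi> :: "('c, 'v, 'p) fm"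
  assumes "const_spec CS"
    and "entails CS T \<phi>"
  shows "deriv_from CS T \<phi>"
proof -
  have "derives CS T \<phi>"
  proof (rule ccontr)
    assume "\<not> derives CS T \<phi>"
    then have "consistent CS (insert (Neg \<phi>) T)"
      by (rule consistent_insert_Neg)
    then obtain G where G: "insert (Neg \<phi>) T \<subseteq> G" "max_consistent CS G"
      by (rule lindenbaum)
    have "\<forall>\<psi>\<in>T. sat (canonical_model CS) (G, True) \<psi>"
      using G canonical_truth[OF G(2)] by blast
    then have "sat (canonical_model CS) (G, True) \<phi>"
      using assms(2) canonical_model_J4C[OF G(2)] G(2) unfolding entails_def by simp
    then have "\<phi> \<in> G"
      using canonical_truth[OF G(2)] by blast
    then show False
      using G max_consistent_Neg[OF G(2)] by blast
  qed
  then show ?thesis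
    by (rule derives_imp_deriv_from)
qed

end
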